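(* Let $F$ be a distribution function whose tail $\overline F=1-F$ is a normalized regularly varying function of index $-\alpha$, $\alpha>0$. Let $\delta>0$. There exists $t_4$ such that for any $0<u\le v$, any $t\ge t_4$ and any nonnegative integer $k<\alpha$, $$\int_{tv}^\infty x^k\,d\mathsf M_uF(x)\le\frac{2\alpha}{\alpha-k}\,v^k\Bigl(\frac uv\Bigr)^{\alpha-\delta}t^k\,\overline F(t).$$
   Context: For $u>0$, $\mathsf M_uF(x)=F(x/u)$ is the distribution function of $uX$ when $X$ has distribution $F$. A function $g$ on $[a,\infty)$ is normalized regularly varying with index $\rho$ if $g(t)=c\,t^\rho\exp\int_a^t\frac{\epsilon(s)}{s}ds$ with $c>0$ and $\epsilon(s)\to0$ as $s\to\infty$. *)

theory Defs
  imports "HOL-Analysis.Analysis"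
begin

definition distribution_function :: "(real \<Rightarrow> real) \<Rightarrow> bool" where
  "distribution_function F \<longleftrightarrow>
     mono F \<and> (\<forall>x. continuous (at_right x) F) \<and>
     (F \<longlongrightarrow> 0) at_bot \<and> (F \<longlongrightarrow> 1) at_top"

text \<open>Scaling: \<open>M_u F x = F (x/u)\<close>, the distribution function of \<open>uX\<close>.\<close>
definition scaleDF :: "real \<Rightarrow> (real \<Rightarrow> real) \<Rightarrow> real \<Rightarrow> real" where
  "scaleDF u F x = F (x / u)"

definition normalized_RV :: "(real \<Rightarrow> real) \<Rightarrow> real \<Rightarrow> bool" where
  "normalized_RV g \<rho> \<longleftrightarrow>
     (\<exists>a c \<epsilon>. a > 0 \<and> c > 0 \<and> (\<epsilon> \<longlongrightarrow> 0) at_top \<and>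
        (\<forall>t\<ge>a. (\<lambda>s. \<epsilon> s / s) integrable_on {a..t} \<and>
                 g t = c * t powr \<rho> * exp (integral {a..t} (\<lambda>s. \<epsilon> s / s))))"

end

theory Submission
  imports Defs "HOL-Probability.Distribution_Functions"
begin

text \<open>
  Write \<open>G = 1 - F\<close>. In the representation \<open>G t = c t\<^sup>-\<^sup>\<alpha> exp \<integral>\<^sub>a\<^sup>t \<epsilon>(s)/s ds\<close> we have
  \<open>\<epsilon> \<le> \<eta>\<close> eventually, which gives Potter's bound \<open>G z \<le> (z/t)\<^bsup>-\<beta>\<^esup> G t\<close> for \<open>z \<ge> t \<ge> T\<close>, \<open>\<beta> = \<alpha> - \<eta>\<close>.
  For \<open>y \<ge> s = tv\<close> the tail of \<open>M\<^sub>uF\<close> is \<open>G (y/u) \<le> (s/y)\<^sup>\<beta> (u/v)\<^sup>\<beta> G t\<close>.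
  Writing \<open>x\<^sup>k = s\<^sup>k + \<integral>\<^sub>s\<^sup>x k y\<^bsup>k-1\<^esup> dy\<close> and exchanging the integrals bounds the truncated
  moment by \<open>(1 + k/(\<beta>-k)) s\<^sup>k (u/v)\<^sup>\<beta> G t\<close>. Choosing \<open>\<eta> \<le> \<delta>\<close> and \<open>2\<eta> \<le> \<alpha> - k\<close> for every
  integer \<open>k < \<alpha>\<close> makes \<open>\<beta>/(\<beta>-k) \<le> 2\<alpha>/(\<alpha>-k)\<close> and \<open>(u/v)\<^sup>\<beta> \<le> (u/v)\<^bsup>\<alpha>-\<delta>\<^esup>\<close>.
\<close>

lemma integral_le_ln_ratio:
  fixes h :: "real \<Rightarrow> real"
  assumes "h integrable_on {t..z}" and "0 < t" and "t \<le> z"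
    and "\<And>s. s \<in> {t..z} \<Longrightarrow> h s \<le> \<eta> / s"
  shows "integral {t..z} h \<le> \<eta> * ln (z / t)"
proof -
  have "((\<lambda>s. \<eta> / s) has_integral (\<eta> * ln z - \<eta> * ln t)) {t..z}"
  proof (rule fundamental_theorem_of_calculus[OF \<open>t \<le> z\<close>])
    fix x assume "x \<in> {t..z}"
    then have "x > 0" using \<open>0 < t\<close> by auto
    then show "((\<lambda>s. \<eta> * ln s) has_vector_derivative \<eta> / x) (at x within {t..z})"
      by (auto intro!: derivative_eq_intros
          simp: has_real_derivative_iff_has_vector_derivative[symmetric] field_simps)
  qed
  then have "integral {t..z} h \<le> \<eta> * ln z - \<eta> * ln t"
    using has_integral_le[OF integrable_integral[OF assms(1)]] assms(4) by auto
  also have "\<dots> = \<eta> * ln (z / t)"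
    using assms(2,3) by (simp add: ln_div algebra_simps)
  finally show ?thesis .
qed

lemma normalized_RV_Potter_bound:
  assumes "normalized_RV g \<rho>" and "\<eta> > 0"
  shows "eventually (\<lambda>t. \<forall>z\<ge>t. g z \<le> (z / t) powr (\<rho> + \<eta>) * g t) at_top"
proof -
  obtain a c \<epsilon> where "a > 0" "c > 0" and "(\<epsilon> \<longlongrightarrow> 0) at_top"
    and rep: "\<And>t. t \<ge> a \<Longrightarrow> (\<lambda>s. \<epsilon> s / s) integrable_on {a..t} \<and>
                 g t = c * t powr \<rho> * exp (integral {a..t} (\<lambda>s. \<epsilon> s / s))"
    using assms(1) unfolding normalized_RV_def by blast
  define h where "h = (\<lambda>s. \<epsilon> s / s)"
  have rep_h: "h integrable_on {a..t} \<and> g t = c * t powr \<rho> * exp (integral {a..t} h)"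
    if "t \<ge> a" for t
    using rep[OF that] by (simp add: h_def)
  have "eventually (\<lambda>s. \<epsilon> s < \<eta>) at_top"
    using order_tendstoD(2)[OF \<open>(\<epsilon> \<longlongrightarrow> 0) at_top\<close> \<open>\<eta> > 0\<close>] .
  then obtain T where T: "T \<ge> a" and \<epsilon>T: "\<And>s. s \<ge> T \<Longrightarrow> \<epsilon> s \<le> \<eta>"
    unfolding eventually_at_top_linorder by (metis less_imp_le nle_le order_trans)
  have "\<forall>z\<ge>t. g z \<le> (z / t) powr (\<rho> + \<eta>) * g t" if "t \<ge> T" for t
  proof (intro allI impI)
    fix z assume "t \<le> z"
    have "0 < t" "a \<le> t" using that T \<open>a > 0\<close> by auto
    have int_az: "h integrable_on {a..z}" using rep_h[of z] \<open>a \<le> t\<close> \<open>t \<le> z\<close> by simp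
    have split: "integral {a..z} h = integral {a..t} h + integral {t..z} h"
      using Henstock_Kurzweil_Integration.integral_combine[OF \<open>a \<le> t\<close> \<open>t \<le> z\<close> int_az] by simp
    have "integral {t..z} h \<le> \<eta> * ln (z / t)"
    proof (rule integral_le_ln_ratio[OF _ \<open>0 < t\<close> \<open>t \<le> z\<close>])
      show "h integrable_on {t..z}"
        by (rule integrable_subinterval_real[OF int_az]) (use \<open>a \<le> t\<close> in auto)
      show "h s \<le> \<eta> / s" if "s \<in> {t..z}" for s
        using that \<epsilon>T[of s] \<open>t \<ge> T\<close> \<open>0 < t\<close> by (auto simp: h_def divide_right_mono)
    qed
    then have "exp (integral {t..z} h) \<le> (z / t) powr \<eta>"
      using \<open>0 < t\<close> \<open>t \<le> z\<close> by (simp add: powr_def mult.commute)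
    moreover have "g z = (z / t) powr \<rho> * g t * exp (integral {t..z} h)"
      using rep_h[of z] rep_h[of t] \<open>a \<le> t\<close> \<open>t \<le> z\<close> \<open>0 < t\<close>
      by (simp add: split exp_add powr_divide)
    moreover have "(z / t) powr \<rho> * g t \<ge> 0" using rep_h[of t] \<open>a \<le> t\<close> \<open>c > 0\<close> by simp
    ultimately have "g z \<le> (z / t) powr \<rho> * g t * (z / t) powr \<eta>"
      by (metis mult_left_mono)
    then show "g z \<le> (z / t) powr (\<rho> + \<eta>) * g t"
      by (simp add: powr_add mult_ac)
  qed
  then show ?thesis unfolding eventually_at_top_linorder by blast
qed

lemma normalized_RV_eventually_isCont:
  assumes "normalized_RV g \<rho>"
  shows "eventually (\<lambda>x. isCont g x) at_top"
proof -
  obtain a c \<epsilon> where "a > 0"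
    and rep: "\<forall>t\<ge>a. (\<lambda>s. \<epsilon> s / s) integrable_on {a..t} \<and>
                 g t = c * t powr \<rho> * exp (integral {a..t} (\<lambda>s. \<epsilon> s / s))"
    using assms unfolding normalized_RV_def by blast
  let ?G = "\<lambda>y. c * y powr \<rho> * exp (integral {a..y} (\<lambda>s. \<epsilon> s / s))"
  have "isCont g x" if "x > a" for x
  proof -
    have "continuous_on {a..x+1} (\<lambda>y. integral {a..y} (\<lambda>s. \<epsilon> s / s))"
      using rep that by (intro indefinite_integral_continuous_1) auto
    moreover have "x \<in> interior {a..x+1}" using that by auto
    ultimately have "isCont (\<lambda>y. integral {a..y} (\<lambda>s. \<epsilon> s / s)) x"
      by (rule continuous_on_interior)
    then have "isCont ?G x"
      using that \<open>a > 0\<close> by (auto intro!: continuous_intros)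
    moreover have "eventually (\<lambda>y. g y = ?G y) (nhds x)"
      using eventually_nhds_in_open[of "{a<..}" x] that
      by (auto elim!: eventually_mono simp: rep)
    ultimately show ?thesis using isCont_cong by fastforce
  qed
  then show ?thesis using eventually_gt_at_top[of a] by (rule eventually_mono[rotated])
qed

lemma distribution_function_le_1:
  assumes "distribution_function F"
  shows "F x \<le> 1"
proof (rule tendsto_lowerbound)
  show "(F \<longlongrightarrow> 1) at_top" using assms unfolding distribution_function_def by auto
  show "eventually (\<lambda>y. F x \<le> F y) at_top"
    using assms unfolding distribution_function_def eventually_at_top_linorder
    by (auto intro: monoD)
qed simp

lemma distribution_function_scaleDF:
  assumes "distribution_function F" and "u > 0"
  shows "distribution_function (scaleDF u F)"
proof -
  have mono: "mono F" and right_cont: "\<And>x. continuous (at_right x) F"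
    and bot: "(F \<longlongrightarrow> 0) at_bot" and top: "(F \<longlongrightarrow> 1) at_top"
    using assms(1) unfolding distribution_function_def by auto
  have scale: "scaleDF u F = F \<circ> (\<lambda>x. x / u)" by (auto simp: scaleDF_def fun_eq_iff)
  have "mono (\<lambda>x. x / u)" using \<open>u > 0\<close> by (auto intro!: monoI divide_right_mono)
  moreover have "continuous (at_right x) (F \<circ> (\<lambda>x. x / u))" for x
  proof (rule continuous_within_compose)
    show "continuous (at_right x) (\<lambda>x. x / u)" using \<open>u > 0\<close> by (intro continuous_intros) auto
    have "(\<lambda>x. x / u) ` {x<..} = {x / u<..}"
      using \<open>u > 0\<close> by (auto simp: field_simps image_iff intro!: exI[of _ "_ * u"])
    then show "continuous (at (x / u) within (\<lambda>x. x / u) ` {x<..}) F"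
      using right_cont by simp
  qed
  moreover have "filterlim (\<lambda>x. x / u) at_bot at_bot" "filterlim (\<lambda>x. x / u) at_top at_top"
    using \<open>u > 0\<close> by (auto intro!: filterlim_tendsto_pos_mult_at_bot filterlim_tendsto_pos_mult_at_top
        filterlim_ident simp: divide_inverse mult.commute[of _ "inverse u"])
  ultimately show ?thesis
    unfolding distribution_function_def scale o_def
    using filterlim_compose[OF bot] filterlim_compose[OF top] mono
    by (auto simp: mono_def)
qed

lemma real_distribution_interval_measure_of_distribution_function:
  assumes "distribution_function F"
  shows "real_distribution (interval_measure F)" and "cdf (interval_measure F) = F"
  using assms unfolding distribution_function_def
  by (auto intro!: real_distribution_interval_measure cdf_interval_measure intro: monoD)

lemma emeasure_interval_measure_atLeast:
  assumes "distribution_function F" and "isCont F y"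
  shows "emeasure (interval_measure F) {y..} = ennreal (1 - F y)"
proof -
  let ?M = "interval_measure F"
  interpret real_distribution ?M
    using real_distribution_interval_measure_of_distribution_function[OF assms(1)] by simp
  have cdf: "cdf ?M = F"
    using real_distribution_interval_measure_of_distribution_function[OF assms(1)] by simp
  have "F y = measure ?M ({..<y} \<union> {y})"
    using cdf unfolding cdf_def by (metis ivl_disj_un_singleton(2))
  also have "\<dots> = measure ?M {..<y} + measure ?M {y}"
    by (rule finite_measure_Union) auto
  also have "measure ?M {y} = 0" using isCont_cdf assms(2) cdf by metis
  finally have "measure ?M {..<y} = F y" by simp
  moreover have "measure ?M {y..} = 1 - measure ?M {..<y}"
    using prob_compl[of "{..<y}"] by (auto simp: Compl_eq_Diff_UNIV[symmetric] not_less)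
  ultimately show ?thesis by (simp add: emeasure_eq_measure)
qed

lemma nn_integral_powr_atLeast:
  fixes s e :: real
  assumes "s > 0" and "e < -1"
  shows "(\<integral>\<^sup>+y\<in>{s..}. ennreal (y powr e) \<partial>lborel) = ennreal (- (s powr (e + 1) / (e + 1)))"
proof -
  have "(\<integral>\<^sup>+y. ennreal (y powr e) * indicator {s..} y \<partial>lborel) = ennreal (0 - s powr (e + 1) / (e + 1))"
  proof (rule nn_integral_FTC_atLeast)
    show "DERIV (\<lambda>y. y powr (e + 1) / (e + 1)) x :> x powr e" if "s \<le> x" for x
      using that assms by (auto intro!: derivative_eq_intros)
    have "((\<lambda>y. y powr (e + 1)) \<longlongrightarrow> 0) at_top"
      using assms(2) by (intro tendsto_neg_powr filterlim_ident) auto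
    then show "((\<lambda>y. y powr (e + 1) / (e + 1)) \<longlongrightarrow> 0) at_top"
      using tendsto_divide_zero by blast
  qed auto
  then show ?thesis by simp
qed

lemma nn_integral_power_atLeast_layer_cake:
  fixes M :: "real measure" and k :: nat
  assumes "sigma_finite_measure M" and sets_M [measurable_cong]: "sets M = sets borel"
    and "s \<ge> 0"
  shows "(\<integral>\<^sup>+x\<in>{s..}. ennreal (x ^ k) \<partial>M)
    = ennreal (s ^ k) * emeasure M {s..}
      + (\<integral>\<^sup>+y\<in>{s..}. ennreal (real k * y ^ (k - 1)) * emeasure M {y..} \<partial>lborel)"
proof -
  define f where "f x y = ennreal (real k * y ^ (k - 1)) * indicator {s..} y * indicator {y..} x"
    for x y :: real
  have [measurable]: "Measurable.pred (borel \<Otimes>\<^sub>M borel) (\<lambda>x::real \<times> real. fst x \<in> {snd x..})"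
    unfolding atLeast_iff by measurable
  have f_measurable [measurable]: "case_prod f \<in> borel_measurable (M \<Otimes>\<^sub>M lborel)"
    unfolding f_def by measurable
  have power_eq: "ennreal (x ^ k) * indicator {s..} x
      = ennreal (s ^ k) * indicator {s..} x + (\<integral>\<^sup>+y. f x y \<partial>lborel)" for x
  proof (cases "s \<le> x")
    case True
    have "(\<integral>\<^sup>+y. f x y \<partial>lborel)
        = (\<integral>\<^sup>+y. ennreal (real k * y ^ (k - 1)) * indicator {s..x} y \<partial>lborel)"
      unfolding f_def by (intro nn_integral_cong) (auto simp: indicator_def)
    also have "\<dots> = ennreal (x ^ k - s ^ k)"
      by (rule nn_integral_FTC_Icc) (use True \<open>s \<ge> 0\<close> in \<open>auto intro!: derivative_eq_intros\<close>)
    finally show ?thesis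
      using True \<open>s \<ge> 0\<close> power_mono[of s x k] by (simp add: ennreal_plus[symmetric])
  next
    case False
    then have "f x y = 0" for y by (auto simp: f_def indicator_def)
    then show ?thesis using False by simp
  qed
  have "(\<integral>\<^sup>+x\<in>{s..}. ennreal (x ^ k) \<partial>M)
      = ennreal (s ^ k) * emeasure M {s..} + (\<integral>\<^sup>+x. (\<integral>\<^sup>+y. f x y \<partial>lborel) \<partial>M)"
    unfolding power_eq
    by (subst nn_integral_add)
       (auto intro!: lborel.borel_measurable_nn_integral[OF f_measurable]
             simp: nn_integral_cmult_indicator)
  also have "(\<integral>\<^sup>+x. (\<integral>\<^sup>+y. f x y \<partial>lborel) \<partial>M) = (\<integral>\<^sup>+y. (\<integral>\<^sup>+x. f x y \<partial>M) \<partial>lborel)"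
    using assms(1) lborel.sigma_finite_measure_axioms
    by (intro pair_sigma_finite.Fubini'[symmetric, OF _ f_measurable])
       (simp add: pair_sigma_finite_def)
  also have "\<dots> = (\<integral>\<^sup>+y\<in>{s..}. ennreal (real k * y ^ (k - 1)) * emeasure M {y..} \<partial>lborel)"
    unfolding f_def
    by (intro nn_integral_cong, subst nn_integral_cmult_indicator) (simp_all add: sets_M mult_ac)
  finally show ?thesis .
qed

lemma nn_integral_power_atLeast_le_of_tail:
  fixes M :: "real measure" and k :: nat
  assumes "sigma_finite_measure M" and "sets M = sets borel"
    and "s > 0" and "real k < \<beta>" and "C \<ge> 0"
    and tail: "\<And>y. y \<ge> s \<Longrightarrow> emeasure M {y..} \<le> ennreal ((s / y) powr \<beta> * C)"
  shows "(\<integral>\<^sup>+x\<in>{s..}. ennreal (x ^ k) \<partial>M) \<le> ennreal (\<beta> / (\<beta> - real k) * s ^ k * C)"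
proof -
  define K where "K = real k * C * s powr \<beta>"
  have "K \<ge> 0" using \<open>C \<ge> 0\<close> by (simp add: K_def)
  have density_le: "ennreal (real k * y ^ (k - 1)) * emeasure M {y..}
      \<le> ennreal K * ennreal (y powr (real k - 1 - \<beta>))" if "y \<ge> s" for y
  proof -
    have "y > 0" using that \<open>s > 0\<close> by linarith
    have power_eq: "real k * y ^ (k - 1) = real k * y powr (real k - 1)"
      using \<open>y > 0\<close> by (cases k) (simp_all add: powr_realpow)
    have "ennreal (real k * y ^ (k - 1)) * emeasure M {y..}
        \<le> ennreal (real k * y ^ (k - 1)) * ennreal ((s / y) powr \<beta> * C)"
      using tail[OF that] by (rule mult_left_mono) simp
    also have "\<dots> = ennreal (real k * y powr (real k - 1) * ((s / y) powr \<beta> * C))"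
      using \<open>C \<ge> 0\<close> \<open>y > 0\<close> by (subst power_eq[symmetric]) (simp add: ennreal_mult)
    also have "real k * y powr (real k - 1) * ((s / y) powr \<beta> * C)
        = K * (y powr (real k - 1) / y powr \<beta>)"
      using \<open>y > 0\<close> \<open>s > 0\<close> by (simp add: K_def powr_divide)
    also have "\<dots> = K * y powr (real k - 1 - \<beta>)"
      by (simp add: powr_diff)
    finally show ?thesis using \<open>K \<ge> 0\<close> by (simp add: ennreal_mult)
  qed
  have "(\<integral>\<^sup>+y\<in>{s..}. ennreal (real k * y ^ (k - 1)) * emeasure M {y..} \<partial>lborel)
      \<le> (\<integral>\<^sup>+y\<in>{s..}. ennreal K * ennreal (y powr (real k - 1 - \<beta>)) \<partial>lborel)"
    using density_le by (intro nn_integral_mono) (auto simp: indicator_def)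
  also have "\<dots> = ennreal K * ennreal (s powr (real k - \<beta>) / (\<beta> - real k))"
    using \<open>s > 0\<close> \<open>real k < \<beta>\<close>
    by (simp add: nn_integral_cmult mult.assoc nn_integral_powr_atLeast minus_divide_right)
  also have "\<dots> = ennreal (real k / (\<beta> - real k) * s ^ k * C)"
    using \<open>s > 0\<close> \<open>real k < \<beta>\<close> \<open>K \<ge> 0\<close>
    by (simp add: K_def ennreal_mult[symmetric] powr_diff powr_realpow mult_ac)
  finally have integral_le: "(\<integral>\<^sup>+y\<in>{s..}. ennreal (real k * y ^ (k - 1)) * emeasure M {y..} \<partial>lborel)
      \<le> ennreal (real k / (\<beta> - real k) * s ^ k * C)" .
  have "ennreal (s ^ k) * emeasure M {s..} \<le> ennreal (s ^ k * C)"
    using tail[of s] \<open>s > 0\<close> by (simp add: ennreal_mult' mult_left_mono)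
  then have "(\<integral>\<^sup>+x\<in>{s..}. ennreal (x ^ k) \<partial>M)
      \<le> ennreal (s ^ k * C) + ennreal (real k / (\<beta> - real k) * s ^ k * C)"
    unfolding nn_integral_power_atLeast_layer_cake[OF assms(1,2) less_imp_le[OF \<open>s > 0\<close>]]
    using integral_le by (rule add_mono)
  also have "\<dots> = ennreal (\<beta> / (\<beta> - real k) * s ^ k * C)"
    using \<open>s > 0\<close> \<open>C \<ge> 0\<close> \<open>real k < \<beta>\<close>
    by (simp add: ennreal_plus[symmetric] field_simps)
  finally show ?thesis .
qed

lemma nn_integral_power_scaleDF_le:
  fixes F :: "real \<Rightarrow> real" and k :: nat
  assumes F: "distribution_function F" and "T > 0"
    and cont: "\<And>x. x \<ge> T \<Longrightarrow> isCont F x"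
    and Potter: "\<And>t z. T \<le> t \<Longrightarrow> t \<le> z \<Longrightarrow> 1 - F z \<le> (z / t) powr (- \<beta>) * (1 - F t)"
    and "0 < u" and "u \<le> v" and "T \<le> t" and "real k < \<beta>"
  shows "(\<integral>\<^sup>+x\<in>{t * v..}. ennreal (x ^ k) \<partial>interval_measure (scaleDF u F))
    \<le> ennreal (\<beta> / (\<beta> - real k) * (t * v) ^ k * ((u / v) powr \<beta> * (1 - F t)))"
proof -
  let ?M = "interval_measure (scaleDF u F)"
  have DF: "distribution_function (scaleDF u F)"
    using distribution_function_scaleDF[OF F \<open>0 < u\<close>] .
  interpret real_distribution ?M
    using real_distribution_interval_measure_of_distribution_function[OF DF] by simp
  have "t > 0" "v > 0" using \<open>T > 0\<close> \<open>T \<le> t\<close> \<open>0 < u\<close> \<open>u \<le> v\<close> by linarith+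
  show ?thesis
  proof (rule nn_integral_power_atLeast_le_of_tail)
    show "sigma_finite_measure ?M" by unfold_locales
    show "t * v > 0" using \<open>t > 0\<close> \<open>v > 0\<close> by simp
    show "(u / v) powr \<beta> * (1 - F t) \<ge> 0"
      using distribution_function_le_1[OF F] by simp
    show "emeasure ?M {y..} \<le> ennreal ((t * v / y) powr \<beta> * ((u / v) powr \<beta> * (1 - F t)))"
      if "y \<ge> t * v" for y
    proof -
      have "t \<le> y / u"
        using that \<open>0 < u\<close> mult_left_mono[OF \<open>u \<le> v\<close> less_imp_le[OF \<open>t > 0\<close>]]
        by (simp add: field_simps)
      have "isCont (\<lambda>x. x / u) y" using \<open>0 < u\<close> by (intro continuous_intros) auto
      then have "isCont (scaleDF u F) y"
        unfolding scaleDF_def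
        by (rule isCont_o2) (use cont \<open>T \<le> t\<close> \<open>t \<le> y / u\<close> in auto)
      then have "emeasure ?M {y..} = ennreal (1 - F (y / u))"
        using emeasure_interval_measure_atLeast[OF DF] by (simp add: scaleDF_def)
      also have "1 - F (y / u) \<le> (y / u / t) powr (- \<beta>) * (1 - F t)"
        using Potter[OF \<open>T \<le> t\<close> \<open>t \<le> y / u\<close>] .
      also have "(y / u / t) powr (- \<beta>) = (t * v / y) powr \<beta> * (u / v) powr \<beta>"
      proof -
        have "y > 0" using that mult_pos_pos[OF \<open>t > 0\<close> \<open>v > 0\<close>] by linarith
        then show ?thesis
          using \<open>0 < u\<close> \<open>v > 0\<close> \<open>t > 0\<close>
          by (simp add: powr_minus_divide powr_divide powr_mult)
      qed
      finally show ?thesis by (simp add: ennreal_leI mult_ac)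
    qed
  qed (use \<open>real k < \<beta>\<close> in auto)
qed

lemma of_nat_le_ceiling_minus_one:
  assumes "real k < \<alpha>"
  shows "real k \<le> of_int \<lceil>\<alpha>\<rceil> - 1"
proof -
  have "int k < \<lceil>\<alpha>\<rceil>" using assms le_of_int_ceiling[of \<alpha>] by linarith
  then show ?thesis by linarith
qed

lemma moment_constant_le:
  fixes \<alpha> \<delta> \<eta> \<kappa> q :: real
  assumes "0 < \<eta>" and "\<eta> \<le> \<delta>" and "2 * \<eta> \<le> \<alpha> - \<kappa>" and "0 \<le> \<kappa>"
    and "0 < q" and "q \<le> 1"
  shows "(\<alpha> - \<eta>) / (\<alpha> - \<eta> - \<kappa>) * q powr (\<alpha> - \<eta>) \<le> 2 * \<alpha> / (\<alpha> - \<kappa>) * q powr (\<alpha> - \<delta>)"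
proof (rule mult_mono)
  have "(\<alpha> - \<eta>) / (\<alpha> - \<eta> - \<kappa>) \<le> \<alpha> / ((\<alpha> - \<kappa>) / 2)"
    using assms(1-4) by (intro frac_le) auto
  then show "(\<alpha> - \<eta>) / (\<alpha> - \<eta> - \<kappa>) \<le> 2 * \<alpha> / (\<alpha> - \<kappa>)" by (simp add: mult.commute)
  show "q powr (\<alpha> - \<eta>) \<le> q powr (\<alpha> - \<delta>)"
    using assms by (intro powr_mono') auto
  show "0 \<le> 2 * \<alpha> / (\<alpha> - \<kappa>)" using assms(1-4) by simp
qed simp

theorem lemma5p3p3:
  fixes F :: "real \<Rightarrow> real" and \<alpha> \<delta> :: real
  assumes "distribution_function F"
    and "\<alpha> > 0"
    and "normalized_RV (\<lambda>x. 1 - F x) (- \<alpha>)"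
    and "\<delta> > 0"
  shows "\<exists>t4::real. \<forall>u v t :: real. \<forall>k :: nat.
           0 < u \<longrightarrow> u \<le> v \<longrightarrow> t \<ge> t4 \<longrightarrow> real k < \<alpha> \<longrightarrow>
           (\<integral>\<^sup>+ x\<in>{t * v..}. ennreal (x ^ k) \<partial>(interval_measure (scaleDF u F)))
             \<le> ennreal (2 * \<alpha> / (\<alpha> - real k) * v ^ k * (u / v) powr (\<alpha> - \<delta>)
                        * t ^ k * (1 - F t))"
proof -
  define \<eta> where "\<eta> = min \<delta> ((\<alpha> + 1 - \<lceil>\<alpha>\<rceil>) / 2)"
  have "\<eta> > 0" using \<open>\<delta> > 0\<close> ceiling_correct[of \<alpha>] by (simp add: \<eta>_def)
  have gap: "2 * \<eta> \<le> \<alpha> - real k" if "real k < \<alpha>" for k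
    using of_nat_le_ceiling_minus_one[OF that] min.cobounded2[of \<delta> "(\<alpha> + 1 - \<lceil>\<alpha>\<rceil>) / 2"]
    unfolding \<eta>_def by argo
  have "eventually (\<lambda>t. t > 0 \<and> isCont (\<lambda>x. 1 - F x) t \<and>
      (\<forall>z\<ge>t. 1 - F z \<le> (z / t) powr (- \<alpha> + \<eta>) * (1 - F t))) at_top"
    using normalized_RV_eventually_isCont[OF assms(3)] normalized_RV_Potter_bound[OF assms(3) \<open>\<eta> > 0\<close>]
    by (intro eventually_conj eventually_gt_at_top)
  then obtain T where "T > 0" and cont_tail: "\<And>x. x \<ge> T \<Longrightarrow> isCont (\<lambda>x. 1 - F x) x"
    and Potter: "\<And>t z. T \<le> t \<Longrightarrow> t \<le> z \<Longrightarrow> 1 - F z \<le> (z / t) powr (- (\<alpha> - \<eta>)) * (1 - F t)"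
    unfolding eventually_at_top_linorder by (metis order.refl minus_diff_eq uminus_add_conv_diff)
  have cont: "isCont F x" if "x \<ge> T" for x
    using continuous_diff[OF continuous_const cont_tail[OF that], of 1] by simp
  show ?thesis
  proof (intro exI[of _ T] allI impI)
    fix u v t :: real and k :: nat
    assume "0 < u" "u \<le> v" "T \<le> t" "real k < \<alpha>"
    then have "real k < \<alpha> - \<eta>" using gap[of k] \<open>\<eta> > 0\<close> by linarith
    have "(\<integral>\<^sup>+x\<in>{t * v..}. ennreal (x ^ k) \<partial>interval_measure (scaleDF u F))
        \<le> ennreal ((\<alpha> - \<eta>) / (\<alpha> - \<eta> - real k) * (u / v) powr (\<alpha> - \<eta>) * ((t * v) ^ k * (1 - F t)))"
      using nn_integral_power_scaleDF_le[OF assms(1) \<open>T > 0\<close> cont Potter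
          \<open>0 < u\<close> \<open>u \<le> v\<close> \<open>T \<le> t\<close> \<open>real k < \<alpha> - \<eta>\<close>]
      by (simp add: mult_ac)
    also have "\<dots> \<le> ennreal (2 * \<alpha> / (\<alpha> - real k) * (u / v) powr (\<alpha> - \<delta>) * ((t * v) ^ k * (1 - F t)))"
      using moment_constant_le[OF \<open>\<eta> > 0\<close> _ gap[OF \<open>real k < \<alpha>\<close>], of \<delta> "u / v"]
        \<open>0 < u\<close> \<open>u \<le> v\<close> \<open>T \<le> t\<close> \<open>T > 0\<close> distribution_function_le_1[OF assms(1), of t]
      by (intro ennreal_leI mult_right_mono) (auto simp: \<eta>_def)
    finally show "(\<integral>\<^sup>+ x\<in>{t * v..}. ennreal (x ^ k) \<partial>(interval_measure (scaleDF u F)))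
        \<le> ennreal (2 * \<alpha> / (\<alpha> - real k) * v ^ k * (u / v) powr (\<alpha> - \<delta>) * t ^ k * (1 - F t))"
      by (simp add: power_mult_distrib mult_ac)
  qed
qed

end
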